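(* Let $\lambda\ge0$, $d\ge0$ be constants and let $q$ be a probability measure on $(0,\infty)$ of the form $q=q_a+\sum_{r^j\in\mathcal D}p^j\delta_{r^j}$, with $q_a$ absolutely continuous w.r.t. Lebesgue measure, $\mathcal D\subset(0,\infty)$ finite, $p^j>0$, and $\int r\,q(dr)<\infty$. Let $r\mapsto\rho^r\ge0$ on $[0,\infty)$ have finite mass $N=\int_0^\infty\rho^r\,dr<\infty$ and satisfy the stationary equation $$\rho^r-\rho^s+\lambda q((s,r])=d\,N^{(s,r]}\quad\text{for all }0\le s<r,\qquad N^{(s,r]}:=\int_{(s,r]}\rho^\alpha\,d\alpha .$$ Then $\rho^r=\lambda\int_{(r,\infty)}e^{-d(\alpha-r)}q(d\alpha)$ for a.e. $r\ge0$.
   Context: $\delta_x$ denotes the Dirac measure at $x$. *)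

theory Defs
  imports "HOL-Probability.Probability"
begin

end

theory Submission
  imports Defs
begin

text \<open>
  Let \<open>g(t)\<close> be the integral of \<open>exp (- d (\<alpha> - t))\<close> against \<open>q\<close> over \<open>(t,\<infinity>)\<close>.
  Exchanging the order of integration shows that \<open>g\<close> solves the stationary equation with
  \<open>\<lambda> = 1\<close>, so \<open>H = \<rho> - \<lambda> g\<close> solves \<open>H(r) - H(0) = d \<integral>\<^sub>(\<^sub>0\<^sub>,\<^sub>r\<^sub>] H\<close>, i.e. \<open>H(r) = H(0) e\<^sup>d\<^sup>r\<close>.
  If \<open>H(0) > 0\<close> then \<open>\<rho> \<ge> H(0)\<close> on \<open>[0,\<infinity>)\<close>, contradicting integrability; if \<open>H(0) < 0\<close>
  then \<open>0 \<le> \<rho> \<le> \<lambda> g + H(0)\<close>, which is impossible for large \<open>r\<close> since \<open>g(r) \<le> q((r,\<infinity>)) \<rightarrow> 0\<close>.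
  So \<open>\<rho> = \<lambda> g\<close> on all of \<open>[0,\<infinity>)\<close>.
\<close>

lemma exp_solution_of_integral_equation:
  fixes H :: "real \<Rightarrow> real"
  assumes H_int: "H integrable_on {0..b}"
    and H_eq: "\<And>r. r \<in> {0..b} \<Longrightarrow> H r = H 0 + d * integral {0..r} H"
    and b: "0 \<le> b"
  shows "H b = H 0 * exp (d * b)"
proof -
  have H_cont: "continuous_on {0..b} H"
  proof -
    have "continuous_on {0..b} (\<lambda>u. H 0 + d * integral {0..u} H)"
      by (intro continuous_intros indefinite_integral_continuous_1[OF H_int])
    then show ?thesis
      by (rule continuous_on_eq) (rule H_eq[symmetric])
  qed
  have H_deriv: "(H has_field_derivative d * H x) (at x within {0..b})" if x: "x \<in> {0..b}" for x
  proof -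
    have "((\<lambda>u. integral {0..u} H) has_vector_derivative H x) (at x within {0..b})"
      by (rule integral_has_vector_derivative[OF H_cont x])
    then have "((\<lambda>u. H 0 + d * integral {0..u} H) has_field_derivative d * H x) (at x within {0..b})"
      by (auto intro!: derivative_eq_intros simp: has_real_derivative_iff_has_vector_derivative)
    then show ?thesis
    proof (rule has_field_derivative_transform_within[where d=1])
      show "H 0 + d * integral {0..y} H = H y" if "y \<in> {0..b}" for y
        using H_eq[OF that] by simp
    qed (use x in auto)
  qed
  have "\<exists>c. \<forall>x\<in>{0..b}. exp (- d * x) * H x = c"
  proof (rule has_field_derivative_zero_constant)
    fix x assume x: "x \<in> {0..b}"
    have "((\<lambda>x. exp (- d * x) * H x) has_field_derivative
           exp (- d * x) * (- d) * H x + d * H x * exp (- d * x)) (at x within {0..b})"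
      by (rule DERIV_mult[OF _ H_deriv[OF x]]) (auto intro!: derivative_eq_intros)
    then show "((\<lambda>x. exp (- d * x) * H x) has_field_derivative 0) (at x within {0..b})"
      by (simp add: algebra_simps)
  qed simp
  then obtain c where c: "\<And>x. x \<in> {0..b} \<Longrightarrow> exp (- d * x) * H x = c"
    by blast
  have "exp (- d * b) * H b = H 0"
    using c[of b] c[of 0] b by simp
  then have "exp (d * b) * (exp (- d * b) * H b) = H 0 * exp (d * b)"
    by simp
  then show ?thesis
    by (simp add: exp_minus_inverse mult.assoc[symmetric])
qed

lemma exp_solution_of_set_integral_equation:
  fixes H :: "real \<Rightarrow> real"
  assumes H_int: "set_integrable lborel {0..b} H"
    and H_eq: "\<And>r. 0 < r \<Longrightarrow> r \<le> b \<Longrightarrow> H r - H 0 = d * (LINT t:{0<..r}|lborel. H t)"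
    and b: "0 \<le> b"
  shows "H b = H 0 * exp (d * b)"
proof (rule exp_solution_of_integral_equation[OF _ _ b])
  show "H integrable_on {0..b}"
    by (rule set_borel_integral_eq_integral(1)[OF H_int])
  fix r assume r: "r \<in> {0..b}"
  show "H r = H 0 + d * integral {0..r} H"
  proof (cases "r = 0")
    case False
    have "(LINT t:{0<..r}|lborel. H t) = (LINT t:{0..r}|lborel. H t)"
      by (rule set_integral_discrete_difference[where X="{0}"]) auto
    also have "\<dots> = integral {0..r} H"
      by (rule set_borel_integral_eq_integral(2), rule set_integrable_subset[OF H_int]) (use r in auto)
    finally show ?thesis
      using H_eq[of r] r False by simp
  qed simp
qed

lemma set_integrable_Ici_lower_bound_nonpos:
  fixes f :: "real \<Rightarrow> real"
  assumes f_int: "set_integrable lborel {0..} f" and f_ge: "\<And>x. 0 \<le> x \<Longrightarrow> c \<le> f x"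
  shows "c \<le> 0"
proof (rule ccontr)
  assume "\<not> c \<le> 0"
  then have c: "0 < c" by simp
  define I where "I = (LINT x:{0..}|lborel. f x)"
  define T where "T = I / c + 1"
  have "0 \<le> I"
    unfolding I_def set_lebesgue_integral_def
    using c f_ge by (intro integral_nonneg_AE AE_I2) (force simp: indicator_def)
  then have T: "0 \<le> T"
    using c by (simp add: T_def)
  have "T * c = integral\<^sup>L lborel (\<lambda>x. indicator {0..T} x * c)"
    using T by simp
  also have "\<dots> \<le> I"
    unfolding I_def set_lebesgue_integral_def
  proof (rule integral_mono)
    show "integrable lborel (\<lambda>x. indicator {0..T} x * c)"
      using T by (intro integrable_mult_left integrable_real_indicator) auto
    show "integrable lborel (\<lambda>x. indicator {0..} x *\<^sub>R f x)"
      using f_int by (simp add: set_integrable_def)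
    show "indicator {0..T} x * c \<le> indicator {0..} x *\<^sub>R f x" for x
      using f_ge[of x] c by (auto simp: indicator_def)
  qed
  finally have "T * c \<le> I" .
  moreover have "T * c = I + c"
    using c by (simp add: T_def field_simps)
  ultimately show False
    using c by simp
qed

lemma exp_coefficient_eq_0_if_integrable:
  fixes \<rho> a :: "real \<Rightarrow> real" and c d :: real
  assumes d: "0 \<le> d"
    and \<rho>_int: "set_integrable lborel {0..} \<rho>" and \<rho>_nonneg: "\<And>r. 0 \<le> r \<Longrightarrow> 0 \<le> \<rho> r"
    and a_nonneg: "\<And>r. 0 \<le> a r" and a_lim: "(a \<longlongrightarrow> 0) at_top"
    and \<rho>_eq: "\<And>r. 0 \<le> r \<Longrightarrow> \<rho> r = a r + c * exp (d * r)"
  shows "c = 0"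
proof -
  have bounds: "c \<le> \<rho> r \<and> 0 \<le> a r + c" if r: "0 \<le> r" for r
  proof (cases "0 \<le> c")
    case True
    then have "c \<le> c * exp (d * r)"
      using d r by (simp add: mult_le_cancel_left1)
    then show ?thesis
      using \<rho>_eq[OF r] True a_nonneg[of r] by auto
  next
    case False
    then have "c * exp (d * r) \<le> c"
      using d r by (simp add: mult_le_cancel_left1)
    moreover have "0 \<le> a r + c * exp (d * r)"
      using \<rho>_eq[OF r] \<rho>_nonneg[OF r] by simp
    ultimately have "0 \<le> a r + c"
      by linarith
    then show ?thesis
      using \<rho>_nonneg[OF r] False by simp
  qed
  have "c \<le> 0"
    by (rule set_integrable_Ici_lower_bound_nonpos[OF \<rho>_int bounds[THEN conjunct1]])
  moreover have "0 \<le> c"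
  proof (rule tendsto_lowerbound)
    show "((\<lambda>r. a r + c) \<longlongrightarrow> c) at_top"
      using tendsto_add[OF a_lim tendsto_const, of c] by simp
    show "\<forall>\<^sub>F r in at_top. 0 \<le> a r + c"
      using eventually_ge_at_top[of 0] by eventually_elim (rule bounds[THEN conjunct2])
  qed simp
  ultimately show ?thesis
    by simp
qed

lemma nn_integral_exp_kernel_Ioc:
  fixes d s r a :: real
  assumes d: "0 \<le> d" and sr: "s < r"
  shows "(\<integral>\<^sup>+t. ennreal (indicator {s<..r} t * d * (indicator {t<..} a * exp (- d * (a - t)))) \<partial>lborel)
           + ennreal (indicator {s<..} a * exp (- d * (a - s)))
         = ennreal (indicator {r<..} a * exp (- d * (a - r))) + ennreal (indicator {s<..r} a)"
proof (cases "a \<le> s")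
  case True
  then have "(\<integral>\<^sup>+t. ennreal (indicator {s<..r} t * d * (indicator {t<..} a * exp (- d * (a - t)))) \<partial>lborel) = 0"
    by (intro nn_integral_zero') (auto simp: indicator_def)
  then show ?thesis
    using True sr by (simp add: indicator_def)
next
  case False
  define m where "m = min r a"
  have sm: "s \<le> m"
    using False sr by (simp add: m_def)
  have "(\<integral>\<^sup>+t. ennreal (indicator {s<..r} t * d * (indicator {t<..} a * exp (- d * (a - t)))) \<partial>lborel)
      = (\<integral>\<^sup>+t. ennreal (d * exp (- d * (a - t))) * indicator {s..m} t \<partial>lborel)"
  proof (rule nn_integral_cong_AE)
    show "AE t in lborel. ennreal (indicator {s<..r} t * d * (indicator {t<..} a * exp (- d * (a - t))))
      = ennreal (d * exp (- d * (a - t))) * indicator {s..m} t"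
      using AE_lborel_singleton[of s] AE_lborel_singleton[of m]
      by eventually_elim (auto simp: indicator_def m_def)
  qed
  also have "\<dots> = ennreal (exp (- d * (a - m)) - exp (- d * (a - s)))"
    by (rule nn_integral_FTC_Icc) (auto intro!: derivative_eq_intros simp: d sm)
  finally have kernel: "(\<integral>\<^sup>+t. ennreal (indicator {s<..r} t * d * (indicator {t<..} a * exp (- d * (a - t)))) \<partial>lborel)
      = ennreal (exp (- d * (a - m)) - exp (- d * (a - s)))" .
  have "exp (- d * (a - s)) \<le> exp (- d * (a - m))"
    using sm d by (simp add: mult_left_mono)
  then have "ennreal (exp (- d * (a - m)) - exp (- d * (a - s))) + ennreal (exp (- d * (a - s)))
      = ennreal (exp (- d * (a - m)))"
    by (subst ennreal_plus[symmetric]) auto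
  then show ?thesis
    using False kernel sr by (auto simp: indicator_def m_def min_def)
qed

lemma nn_integral_exp_kernel_identity:
  fixes M :: "real measure" and d s r :: real
  assumes M: "sigma_finite_measure M" and M_sets: "sets M = sets borel"
    and d: "0 \<le> d" and sr: "s < r"
  shows "(\<integral>\<^sup>+t. ennreal (indicator {s<..r} t * d) * (\<integral>\<^sup>+a. ennreal (indicator {t<..} a * exp (- d * (a - t))) \<partial>M) \<partial>lborel)
           + (\<integral>\<^sup>+a. ennreal (indicator {s<..} a * exp (- d * (a - s))) \<partial>M)
         = (\<integral>\<^sup>+a. ennreal (indicator {r<..} a * exp (- d * (a - r))) \<partial>M) + emeasure M {s<..r}"
proof -
  interpret P: pair_sigma_finite M lborel
    by (intro pair_sigma_finite.intro M lborel.sigma_finite_measure_axioms)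
  have meas_M: "borel_measurable M = borel_measurable borel"
    by (rule measurable_cong_sets[OF M_sets refl])
  have "Measurable.pred (borel \<Otimes>\<^sub>M borel) (\<lambda>x::real \<times> real. fst x \<in> {snd x<..})"
    unfolding greaterThan_iff by measurable
  then have J_meas: "(\<lambda>(a, t). ennreal (indicator {s<..r} t * d * (indicator {t<..} a * exp (- d * (a - t)))))
      \<in> borel_measurable (borel \<Otimes>\<^sub>M borel)"
    by measurable
  have "(\<integral>\<^sup>+t. ennreal (indicator {s<..r} t * d) * (\<integral>\<^sup>+a. ennreal (indicator {t<..} a * exp (- d * (a - t))) \<partial>M) \<partial>lborel)
      = (\<integral>\<^sup>+t. (\<integral>\<^sup>+a. ennreal (indicator {s<..r} t * d * (indicator {t<..} a * exp (- d * (a - t)))) \<partial>M) \<partial>lborel)"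
  proof (rule nn_integral_cong)
    fix t :: real
    have "(\<lambda>a. ennreal (indicator {t<..} a * exp (- d * (a - t)))) \<in> borel_measurable M"
      unfolding meas_M by measurable
    then show "ennreal (indicator {s<..r} t * d) * (\<integral>\<^sup>+a. ennreal (indicator {t<..} a * exp (- d * (a - t))) \<partial>M)
      = (\<integral>\<^sup>+a. ennreal (indicator {s<..r} t * d * (indicator {t<..} a * exp (- d * (a - t)))) \<partial>M)"
      using d by (subst nn_integral_cmult[symmetric]) (auto simp: ennreal_mult'' indicator_def)
  qed
  also have "\<dots> = (\<integral>\<^sup>+a. (\<integral>\<^sup>+t. ennreal (indicator {s<..r} t * d * (indicator {t<..} a * exp (- d * (a - t)))) \<partial>lborel) \<partial>M)"
    by (rule P.Fubini') (use J_meas M_sets in \<open>simp add: measurable_cong_sets[OF sets_pair_measure_cong[OF M_sets sets_lborel] refl]\<close>)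
  finally have fubini: "(\<integral>\<^sup>+t. ennreal (indicator {s<..r} t * d) * (\<integral>\<^sup>+a. ennreal (indicator {t<..} a * exp (- d * (a - t))) \<partial>M) \<partial>lborel)
      = (\<integral>\<^sup>+a. (\<integral>\<^sup>+t. ennreal (indicator {s<..r} t * d * (indicator {t<..} a * exp (- d * (a - t)))) \<partial>lborel) \<partial>M)" .
  have inner_meas: "(\<lambda>a. \<integral>\<^sup>+t. ennreal (indicator {s<..r} t * d * (indicator {t<..} a * exp (- d * (a - t)))) \<partial>lborel)
      \<in> borel_measurable M"
    unfolding meas_M using J_meas
    by (intro lborel.borel_measurable_nn_integral)
       (simp add: measurable_cong_sets[OF sets_pair_measure_cong[OF refl sets_lborel] refl])
  have "(\<integral>\<^sup>+a. (\<integral>\<^sup>+t. ennreal (indicator {s<..r} t * d * (indicator {t<..} a * exp (- d * (a - t)))) \<partial>lborel) \<partial>M)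
        + (\<integral>\<^sup>+a. ennreal (indicator {s<..} a * exp (- d * (a - s))) \<partial>M)
      = (\<integral>\<^sup>+a. (\<integral>\<^sup>+t. ennreal (indicator {s<..r} t * d * (indicator {t<..} a * exp (- d * (a - t)))) \<partial>lborel)
          + ennreal (indicator {s<..} a * exp (- d * (a - s))) \<partial>M)"
    by (rule nn_integral_add[symmetric]) (use inner_meas in \<open>auto simp: meas_M\<close>)
  also have "\<dots> = (\<integral>\<^sup>+a. ennreal (indicator {r<..} a * exp (- d * (a - r))) + ennreal (indicator {s<..r} a) \<partial>M)"
    by (rule nn_integral_cong) (rule nn_integral_exp_kernel_Ioc[OF d sr])
  also have "\<dots> = (\<integral>\<^sup>+a. ennreal (indicator {r<..} a * exp (- d * (a - r))) \<partial>M) + emeasure M {s<..r}"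
    by (subst nn_integral_add) (auto simp: meas_M M_sets ennreal_indicator simp del: indicator_simps)
  finally show ?thesis
    using fubini by simp
qed

definition discounted_tail :: "real measure \<Rightarrow> real \<Rightarrow> real \<Rightarrow> real" where
  "discounted_tail M d t = (LINT a:{t<..}|M. exp (- d * (a - t)))"

context finite_borel_measure
begin

lemma integrable_discounted_kernel:
  assumes d: "0 \<le> d"
  shows "integrable M (\<lambda>a. indicator {t<..} a * exp (- d * (a - t)))"
proof (rule integrable_const_bound[where B=1])
  show "AE a in M. norm (indicator {t<..} a * exp (- d * (a - t))) \<le> 1"
    using d by (intro AE_I2) (auto simp: indicator_def)
qed (simp add: measurable_cong_sets[OF M_is_borel refl])

lemma discounted_tail_eq_integral:
  "discounted_tail M d t = integral\<^sup>L M (\<lambda>a. indicator {t<..} a * exp (- d * (a - t)))"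
  by (simp add: discounted_tail_def set_lebesgue_integral_def)

lemma discounted_tail_nonneg: "0 \<le> discounted_tail M d t"
  unfolding discounted_tail_eq_integral by (intro integral_nonneg_AE AE_I2) auto

lemma discounted_tail_le_measure:
  assumes d: "0 \<le> d"
  shows "discounted_tail M d t \<le> measure M {t<..}"
proof -
  have "discounted_tail M d t \<le> integral\<^sup>L M (indicator {t<..})"
    unfolding discounted_tail_eq_integral
    using d by (intro integral_mono integrable_discounted_kernel)
      (auto simp: indicator_def M_is_borel emeasure_eq_measure intro!: integrable_real_indicator)
  then show ?thesis
    by (simp add: M_is_borel)
qed

lemma ennreal_discounted_tail:
  assumes d: "0 \<le> d"
  shows "ennreal (discounted_tail M d t) = (\<integral>\<^sup>+a. ennreal (indicator {t<..} a * exp (- d * (a - t))) \<partial>M)"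
  unfolding discounted_tail_eq_integral
  by (rule nn_integral_eq_integral[symmetric, OF integrable_discounted_kernel[OF d]]) auto

lemma borel_measurable_discounted_tail:
  assumes d: "0 \<le> d"
  shows "discounted_tail M d \<in> borel_measurable borel"
proof -
  have "Measurable.pred (borel \<Otimes>\<^sub>M borel) (\<lambda>x::real \<times> real. snd x \<in> {fst x<..})"
    unfolding greaterThan_iff by measurable
  then have "(\<lambda>(t, a). ennreal (indicator {t<..} a * exp (- d * (a - t)))) \<in> borel_measurable (borel \<Otimes>\<^sub>M borel)"
    by measurable
  then have "(\<lambda>t. \<integral>\<^sup>+a. ennreal (indicator {t<..} a * exp (- d * (a - t))) \<partial>M) \<in> borel_measurable borel"
    by (intro borel_measurable_nn_integral)
       (simp add: measurable_cong_sets[OF sets_pair_measure_cong[OF refl M_is_borel] refl])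
  then have "(\<lambda>t. enn2real (\<integral>\<^sup>+a. ennreal (indicator {t<..} a * exp (- d * (a - t))) \<partial>M)) \<in> borel_measurable borel"
    by measurable
  moreover have "(\<lambda>t. enn2real (\<integral>\<^sup>+a. ennreal (indicator {t<..} a * exp (- d * (a - t))) \<partial>M)) = discounted_tail M d"
    by (rule ext, subst ennreal_discounted_tail[OF d, symmetric]) (simp add: discounted_tail_nonneg)
  ultimately show ?thesis
    by simp
qed

lemma set_integrable_discounted_tail:
  assumes d: "0 \<le> d" and A: "A \<in> sets borel" "emeasure lborel A < \<infinity>"
  shows "set_integrable lborel A (discounted_tail M d)"
  unfolding set_integrable_def
proof (rule integrableI_bounded_set[where A=A and B="measure M (space M)"])
  show "AE t in lborel. t \<in> A \<longrightarrow> norm (indicator A t *\<^sub>R discounted_tail M d t) \<le> measure M (space M)"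
    using order_trans[OF discounted_tail_le_measure[OF d] bounded_measure]
    by (intro AE_I2) (simp add: indicator_def discounted_tail_nonneg)
qed (use A borel_measurable_discounted_tail[OF d] in \<open>auto simp: indicator_def\<close>)

lemma discounted_tail_stationary:
  assumes d: "0 \<le> d" and sr: "s < r"
  shows "discounted_tail M d r - discounted_tail M d s + measure M {s<..r}
       = d * (LINT t:{s<..r}|lborel. discounted_tail M d t)"
proof -
  let ?g = "discounted_tail M d"
  have g_int: "set_integrable lborel {s<..r} ?g"
    using sr by (intro set_integrable_discounted_tail[OF d]) auto
  have "(\<integral>\<^sup>+t. ennreal (indicator {s<..r} t * d) * ennreal (?g t) \<partial>lborel)
      = (\<integral>\<^sup>+t. ennreal (d * (indicator {s<..r} t *\<^sub>R ?g t)) \<partial>lborel)"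
    by (intro nn_integral_cong) (simp add: ennreal_mult'[symmetric] discounted_tail_nonneg d mult_ac)
  also have "\<dots> = ennreal (d * (LINT t:{s<..r}|lborel. ?g t))"
    using g_int d unfolding set_integrable_def set_lebesgue_integral_def
    by (subst nn_integral_eq_integral) (auto simp: discounted_tail_nonneg)
  finally have "ennreal (d * (LINT t:{s<..r}|lborel. ?g t)) + ennreal (?g s)
      = ennreal (?g r) + ennreal (measure M {s<..r})"
    using nn_integral_exp_kernel_identity[OF sigma_finite_measure_axioms M_is_borel d sr]
    unfolding ennreal_discounted_tail[OF d, symmetric] by (simp add: emeasure_eq_measure)
  moreover have "0 \<le> d * (LINT t:{s<..r}|lborel. ?g t)"
    using d unfolding set_lebesgue_integral_def
    by (intro mult_nonneg_nonneg integral_nonneg_AE AE_I2) (auto simp: discounted_tail_nonneg)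
  ultimately show ?thesis
    using discounted_tail_nonneg[of d s] discounted_tail_nonneg[of d r]
    by (simp add: ennreal_plus[symmetric] del: ennreal_plus)
qed

lemma tendsto_measure_Ioi_at_top: "((\<lambda>t. measure M {t<..}) \<longlongrightarrow> 0) at_top"
proof -
  have "measure M {t<..} = measure M (space M) - cdf M t" for t
    using finite_measure_Diff[of UNIV "{..t}"] by (simp add: cdf_def borel_UNIV M_is_borel Diff_eq)
  moreover have "((\<lambda>t. measure M (space M) - cdf M t) \<longlongrightarrow> 0) at_top"
    using tendsto_diff[OF tendsto_const cdf_lim_at_top, of "measure M (space M)"] by simp
  ultimately show ?thesis
    by simp
qed

lemma tendsto_discounted_tail_at_top:
  assumes d: "0 \<le> d"
  shows "(discounted_tail M d \<longlongrightarrow> 0) at_top"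
  by (rule tendsto_sandwich[OF _ _ tendsto_const tendsto_measure_Ioi_at_top])
     (auto simp: discounted_tail_nonneg discounted_tail_le_measure d)

lemma stationary_solution_eq:
  fixes \<rho> :: "real \<Rightarrow> real" and lam d r :: real
  assumes d: "0 \<le> d"
    and \<rho>_int: "\<And>b. set_integrable lborel {0..b} \<rho>"
    and stat: "\<And>r. 0 < r \<Longrightarrow>
        \<rho> r - \<rho> 0 + lam * measure M {0<..r} = d * (LINT \<alpha>:{0<..r}|lborel. \<rho> \<alpha>)"
    and r: "0 \<le> r"
  shows "\<rho> r = lam * discounted_tail M d r + (\<rho> 0 - lam * discounted_tail M d 0) * exp (d * r)"
proof -
  let ?g = "discounted_tail M d"
  define H where "H t = \<rho> t - lam * ?g t" for t
  have g_int: "set_integrable lborel {0..b} ?g" for b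
    by (rule set_integrable_discounted_tail[OF d]) (auto simp: emeasure_lborel_Icc_eq)
  have H_int: "set_integrable lborel {0..b} H" for b
    unfolding H_def using \<rho>_int g_int
    by (intro set_integral_diff(1) set_integrable_mult_right) auto
  have "H r - H 0 = d * (LINT t:{0<..r}|lborel. H t)" if "0 < r" for r
  proof -
    have "set_integrable lborel {0<..r} \<rho>" "set_integrable lborel {0<..r} ?g"
      by (auto intro!: set_integrable_subset[OF \<rho>_int[of r]] set_integrable_subset[OF g_int[of r]])
    then have H_integral: "(LINT t:{0<..r}|lborel. H t) = (LINT t:{0<..r}|lborel. \<rho> t) - lam * (LINT t:{0<..r}|lborel. ?g t)"
      unfolding H_def by (subst set_integral_diff(2)) (auto intro!: set_integrable_mult_right)
    have "lam * (?g r - ?g 0 + measure M {0<..r}) = lam * (d * (LINT t:{0<..r}|lborel. ?g t))"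
      using discounted_tail_stationary[OF d that] by simp
    then show ?thesis
      using stat[OF that] unfolding H_integral by (simp add: H_def algebra_simps)
  qed
  then have "H r = H 0 * exp (d * r)"
    by (intro exp_solution_of_set_integral_equation[OF H_int _ r])
  then show ?thesis
    by (simp add: H_def)
qed

end

theorem proposition2p3:
  fixes lam d :: real
    and q qa :: "real measure"
    and D :: "real set" and p :: "real \<Rightarrow> real"
    and \<rho> :: "real \<Rightarrow> real"
  assumes lam: "lam \<ge> 0" and d: "d \<ge> 0"
    and q_prob: "prob_space q" and q_sets: "sets q = sets borel"
    and q_supp: "emeasure q {..0} = 0"
    and qa_sets: "sets qa = sets borel"
    and qa_ac: "absolutely_continuous lborel qa"
    and D_fin: "finite D" and D_pos: "D \<subseteq> {0<..}"
    and p_pos: "\<And>x. x \<in> D \<Longrightarrow> p x > 0"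
    and q_decomp: "\<And>A. A \<in> sets borel \<Longrightarrow>
        emeasure q A = emeasure qa A + (\<Sum>x\<in>D. ennreal (p x) * emeasure (return borel x) A)"
    and q_mean: "integrable q (\<lambda>r. r)"
    and \<rho>_nonneg: "\<And>r. r \<ge> 0 \<Longrightarrow> \<rho> r \<ge> 0"
    and \<rho>_int: "set_integrable lborel {0..} \<rho>"
    and stat: "\<And>s r. 0 \<le> s \<Longrightarrow> s < r \<Longrightarrow>
        \<rho> r - \<rho> s + lam * measure q {s<..r} = d * (LINT \<alpha>:{s<..r}|lborel. \<rho> \<alpha>)"
  shows "AE r in lborel. r \<ge> 0 \<longrightarrow>
           \<rho> r = lam * (LINT \<alpha>:{r<..}|q. exp (- d * (\<alpha> - r)))"
proof -
  interpret q: finite_borel_measure q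
    using q_prob q_sets
    by (intro finite_borel_measure.intro finite_borel_measure_axioms.intro) (auto simp: prob_space_def)
  let ?g = "discounted_tail q d"
  define c where "c = \<rho> 0 - lam * ?g 0"
  have \<rho>_eq: "\<rho> r = lam * ?g r + c * exp (d * r)" if "0 \<le> r" for r
    unfolding c_def using d set_integrable_subset[OF \<rho>_int] stat that
    by (intro q.stationary_solution_eq) auto
  have "c = 0"
  proof (rule exp_coefficient_eq_0_if_integrable[OF d \<rho>_int \<rho>_nonneg _ _ \<rho>_eq])
    show "0 \<le> lam * ?g r" for r
      using lam by (simp add: q.discounted_tail_nonneg)
    show "((\<lambda>r. lam * ?g r) \<longlongrightarrow> 0) at_top"
      by (rule tendsto_mult_right_zero[OF q.tendsto_discounted_tail_at_top[OF d]])
  qed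
  then show ?thesis
    using \<rho>_eq by (simp add: discounted_tail_def)
qed

end
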